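(* Let $\alpha_n\uparrow\infty$ and for each $n$ let $\pi_n\in\Pi^{\alpha_n}$. Then $\pi_n\to B^*:=\{e_i:1\le i\le m\}$ (i.e., the distance from $\pi_n$ to $B^*$ tends to $0$), where $e_i$ are the unit coordinate vectors of $\mathbb R^m$.
   Context: $\mathcal G=(\mathcal V,\mathcal E)$ is a directed irreducible graph with $|\mathcal V|=m>1$, $\mathcal N(i)=\{j:(i,j)\in\mathcal E\}$, with $i\in\mathcal N(i)$ for all $i$ and $j\in\mathcal N(i)\iff i\in\mathcal N(j)$; $a_{ij}=\mathbb I\{j\in\mathcal N(i)\}$. Rewards $\mu_i>0$. $\mathcal S_m$ is the unit simplex in $\mathbb R^m$. For $\alpha>0$, $f^\alpha_i(x)=(\mu_ix_i)^\alpha$, $\Psi^\alpha(x)=\frac1{2\alpha}\sum_{i,j}a_{ij}f^\alpha_i(x)f^\alpha_j(x)$, and $\Pi^\alpha:=\{\pi\in\mathcal S_m:\pi\text{ is a local maximum of }\Psi^\alpha\text{ on }\mathcal S_m\}$. *)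

theory Defs
  imports "HOL-Analysis.Analysis"
begin

text \<open>Vertices are the elements of a finite type 'n (so m = CARD('n)).
  The graph is given by an adjacency predicate E (E i j iff j is in N(i)).\<close>

definition adj :: "('n \<Rightarrow> 'n \<Rightarrow> bool) \<Rightarrow> 'n \<Rightarrow> 'n \<Rightarrow> real" where
  "adj E i j = (if E i j then 1 else 0)"

definition irreducible_graph :: "('n \<Rightarrow> 'n \<Rightarrow> bool) \<Rightarrow> bool" where
  "irreducible_graph E \<longleftrightarrow> (\<forall>i j. (i, j) \<in> {(a, b). E a b}\<^sup>*)"

definition unit_simplex :: "(real ^ 'n) set" where
  "unit_simplex = {x. (\<forall>i. 0 \<le> x $ i) \<and> (\<Sum>i\<in>UNIV. x $ i) = 1}"

definition f_alpha :: "real \<Rightarrow> ('n \<Rightarrow> real) \<Rightarrow> 'n \<Rightarrow> real ^ 'n \<Rightarrow> real" where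
  "f_alpha \<alpha> \<mu> i x = (\<mu> i * x $ i) powr \<alpha>"

definition Psi :: "('n::finite \<Rightarrow> 'n \<Rightarrow> bool) \<Rightarrow> ('n \<Rightarrow> real) \<Rightarrow> real \<Rightarrow> real ^ 'n \<Rightarrow> real" where
  "Psi E \<mu> \<alpha> x = (1 / (2 * \<alpha>)) *
     (\<Sum>i\<in>UNIV. \<Sum>j\<in>UNIV. adj E i j * f_alpha \<alpha> \<mu> i x * f_alpha \<alpha> \<mu> j x)"

definition local_max_on :: "(real ^ 'n \<Rightarrow> real) \<Rightarrow> (real ^ 'n) set \<Rightarrow> real ^ 'n \<Rightarrow> bool" where
  "local_max_on F S p \<longleftrightarrow> p \<in> S \<and> (\<exists>e>0. \<forall>y\<in>S. dist y p < e \<longrightarrow> F y \<le> F p)"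

definition Pi_alpha :: "('n::finite \<Rightarrow> 'n \<Rightarrow> bool) \<Rightarrow> ('n \<Rightarrow> real) \<Rightarrow> real \<Rightarrow> (real ^ 'n) set" where
  "Pi_alpha E \<mu> \<alpha> = {p. local_max_on (Psi E \<mu> \<alpha>) unit_simplex p}"

definition B_star :: "(real ^ 'n) set" where
  "B_star = {axis i 1 | i. True}"

end

theory Submission imports Defs begin

text \<open>For \<open>\<alpha> > 1\<close> every local maximiser of \<open>\<Psi>\<^sup>\<alpha>\<close> on the simplex is a vertex, so \<open>\<pi>\<^sub>n \<in> B\<^sup>*\<close>
  as soon as \<open>\<alpha>\<^sub>n > 1\<close>. Indeed, if \<open>\<pi>\<^sub>i, \<pi>\<^sub>k > 0\<close> with \<open>i \<noteq> k\<close>, move mass \<open>\<plusminus>t\<close> between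
  \<open>i\<close> and \<open>k\<close>. Writing \<open>\<Psi>\<^sup>\<alpha> = Q(f\<^sup>\<alpha>) / 2\<alpha>\<close> with \<open>Q\<close>, \<open>B\<close> the quadratic and bilinear forms of the
  adjacency matrix, the two moves change \<open>f\<^sup>\<alpha>\<close> by \<open>d\<^sub>1, d\<^sub>2\<close> supported on \<open>{i, k}\<close>, and
  \<open>Q(w + d\<^sub>1) + Q(w + d\<^sub>2) - 2 Q(w) = 2 B(w, d\<^sub>1 + d\<^sub>2) + Q(d\<^sub>1) + Q(d\<^sub>2)\<close>.
  Strict convexity of \<open>s \<mapsto> s\<^sup>\<alpha>\<close> makes \<open>d\<^sub>1 + d\<^sub>2\<close> positive at \<open>i\<close> and \<open>k\<close>, so the bilinear
  term is positive because \<open>a\<^sub>i\<^sub>i = 1\<close>; and \<open>Q(d) = d\<^sub>i\<^sup>2 + d\<^sub>k\<^sup>2 + 2a\<^sub>i\<^sub>kd\<^sub>id\<^sub>k \<ge> 0\<close> since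
  \<open>a\<^sub>i\<^sub>k \<in> {0, 1}\<close>. Hence one of the two moves increases \<open>\<Psi>\<^sup>\<alpha>\<close>.\<close>

lemma powr_midpoint_less:
  fixes x t a :: real
  assumes "0 < t" "t < x" "1 < a"
  shows "2 * x powr a < (x + t) powr a + (x - t) powr a"
proof -
  let ?g = "\<lambda>s. (x + s) powr a + (x - s) powr a"
  have "?g 0 < ?g t"
  proof (rule DERIV_pos_imp_increasing_open[OF \<open>0 < t\<close>])
    fix s assume s: "0 < s" "s < t"
    have "DERIV (\<lambda>s. (x + s) powr a) s :> a * (x + s) powr (a - of_nat 1) * 1"
      by (rule DERIV_fun_powr) (use s assms in \<open>auto intro!: derivative_eq_intros\<close>)
    moreover have "DERIV (\<lambda>s. (x - s) powr a) s :> a * (x - s) powr (a - of_nat 1) * (-1)"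
      by (rule DERIV_fun_powr) (use s assms in \<open>auto intro!: derivative_eq_intros\<close>)
    ultimately have "DERIV ?g s :> a * ((x + s) powr (a - 1) - (x - s) powr (a - 1))"
      by (auto dest: DERIV_add simp: algebra_simps)
    moreover have "(x - s) powr (a - 1) < (x + s) powr (a - 1)"
      using s assms by (intro powr_less_mono2) auto
    ultimately show "\<exists>y. DERIV ?g s :> y \<and> 0 < y"
      using assms by auto
  next
    show "continuous_on {0..t} ?g"
      using assms by (auto intro!: continuous_intros)
  qed
  then show ?thesis by simp
qed

definition adj_form :: "('n::finite \<Rightarrow> 'n \<Rightarrow> bool) \<Rightarrow> ('n \<Rightarrow> real) \<Rightarrow> ('n \<Rightarrow> real) \<Rightarrow> real" where
  "adj_form E u v = (\<Sum>j\<in>UNIV. \<Sum>l\<in>UNIV. adj E j l * u j * v l)"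

lemma adj_form_add_left:
  "adj_form E (\<lambda>j. u j + u' j) v = adj_form E u v + adj_form E u' v"
  unfolding adj_form_def by (simp add: algebra_simps sum.distrib)

lemma adj_form_add_right:
  "adj_form E u (\<lambda>j. v j + v' j) = adj_form E u v + adj_form E u v'"
  unfolding adj_form_def by (simp add: algebra_simps sum.distrib)

lemma Psi_eq_adj_form:
  "Psi E \<mu> \<alpha> x = adj_form E (\<lambda>j. f_alpha \<alpha> \<mu> j x) (\<lambda>j. f_alpha \<alpha> \<mu> j x) / (2 * \<alpha>)"
  unfolding Psi_def adj_form_def by simp

lemma adj_form_pos:
  assumes "\<And>j. 0 \<le> u j" "\<And>j. 0 \<le> v j" "0 < u i" "0 < v i" "E i i"
  shows "0 < adj_form E u v"
proof -
  have nonneg: "0 \<le> adj E j l * u j * v l" for j l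
    using assms(1,2) by (simp add: adj_def)
  have "0 < adj E i i * u i * v i"
    using assms(3-5) by (simp add: adj_def)
  also have "\<dots> \<le> (\<Sum>l\<in>UNIV. adj E i l * u i * v l)"
    by (rule member_le_sum) (use nonneg in auto)
  also have "\<dots> \<le> adj_form E u v"
    unfolding adj_form_def by (rule member_le_sum) (use nonneg in \<open>auto intro: sum_nonneg\<close>)
  finally show ?thesis .
qed

lemma adj_form_nonneg_if_support_pair:
  assumes "\<And>j. j \<noteq> i \<Longrightarrow> j \<noteq> k \<Longrightarrow> d j = 0"
    and "i \<noteq> k" "E i i" "E k k" "E i k \<longleftrightarrow> E k i"
  shows "0 \<le> adj_form E d d"
proof -
  have inner: "(\<Sum>l\<in>UNIV. adj E j l * d j * d l) = (\<Sum>l\<in>{i, k}. adj E j l * d j * d l)" for j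
    by (rule sum.mono_neutral_right) (use assms(1) in auto)
  have "adj_form E d d = (\<Sum>j\<in>{i, k}. \<Sum>l\<in>{i, k}. adj E j l * d j * d l)"
    unfolding adj_form_def inner by (rule sum.mono_neutral_right) (use assms(1) in auto)
  also have "\<dots> = d i * d i + d k * d k + 2 * adj E i k * d i * d k"
    using assms(2-5) by (simp add: adj_def)
  also have "\<dots> = (if E i k then (d i + d k)\<^sup>2 else (d i)\<^sup>2 + (d k)\<^sup>2)"
    by (simp add: adj_def power2_eq_square algebra_simps)
  finally show ?thesis by simp
qed

lemma Psi_transfer_midpoint_less:
  fixes E :: "'n::finite \<Rightarrow> 'n \<Rightarrow> bool" and p :: "real ^ 'n"
  assumes "\<And>i. E i i" "\<And>i j. E i j \<longleftrightarrow> E j i" "\<And>i. 0 < \<mu> i" "\<And>j. 0 \<le> p $ j"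
    and "1 < \<alpha>" "i \<noteq> k" "0 < t" "t < p $ i" "t < p $ k"
  defines "v \<equiv> axis i 1 - axis k 1"
  shows "2 * Psi E \<mu> \<alpha> p < Psi E \<mu> \<alpha> (p + t *\<^sub>R v) + Psi E \<mu> \<alpha> (p - t *\<^sub>R v)"
proof -
  define w where "w j = f_alpha \<alpha> \<mu> j p" for j
  define d1 where "d1 j = f_alpha \<alpha> \<mu> j (p + t *\<^sub>R v) - w j" for j
  define d2 where "d2 j = f_alpha \<alpha> \<mu> j (p - t *\<^sub>R v) - w j" for j
  have d1_support: "d1 j = 0" and d2_support: "d2 j = 0" if "j \<noteq> i" "j \<noteq> k" for j
    using that by (simp_all add: d1_def d2_def w_def v_def axis_def f_alpha_def)
  have midpoint: "0 < d1 j + d2 j" if "j = i \<or> j = k" for j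
    using that powr_midpoint_less[of "\<mu> j * t" "\<mu> j * p $ j" \<alpha>] assms(3)[of j] assms(5-9)
    by (auto simp: d1_def d2_def w_def v_def axis_def f_alpha_def algebra_simps)
  then have "0 \<le> d1 j + d2 j" for j
    using d1_support d2_support by (metis order.refl add_0 less_imp_le)
  moreover have "0 \<le> w j" for j
    by (simp add: w_def f_alpha_def)
  moreover have "0 < w i"
    using assms(3)[of i] assms(7,8) by (simp add: w_def f_alpha_def)
  ultimately have "0 < adj_form E w (\<lambda>j. d1 j + d2 j)" "0 < adj_form E (\<lambda>j. d1 j + d2 j) w"
    using midpoint assms(1) by (auto intro!: adj_form_pos[where i=i])
  moreover have "0 \<le> adj_form E d1 d1" "0 \<le> adj_form E d2 d2"
    using d1_support d2_support assms(1,2,6) by (auto intro!: adj_form_nonneg_if_support_pair)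
  ultimately have "2 * adj_form E w w
      < adj_form E (\<lambda>j. w j + d1 j) (\<lambda>j. w j + d1 j) + adj_form E (\<lambda>j. w j + d2 j) (\<lambda>j. w j + d2 j)"
    by (simp add: adj_form_add_left adj_form_add_right)
  moreover have "(\<lambda>j. w j + d1 j) = (\<lambda>j. f_alpha \<alpha> \<mu> j (p + t *\<^sub>R v))"
    "(\<lambda>j. w j + d2 j) = (\<lambda>j. f_alpha \<alpha> \<mu> j (p - t *\<^sub>R v))"
    by (simp_all add: d1_def d2_def)
  ultimately show ?thesis
    using assms(5) by (simp add: Psi_eq_adj_form w_def[abs_def] divide_simps)
qed

lemma unit_simplex_transfer_mem:
  assumes "p \<in> unit_simplex" "\<bar>t\<bar> \<le> p $ i" "\<bar>t\<bar> \<le> p $ k"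
  shows "p + t *\<^sub>R (axis i 1 - axis k 1) \<in> unit_simplex"
proof -
  have "(\<Sum>j\<in>UNIV. (axis i 1 - axis k 1) $ j) = (0::real)"
    by (simp add: sum_subtractf axis_def)
  then have "(\<Sum>j\<in>UNIV. (p + t *\<^sub>R (axis i 1 - axis k 1)) $ j) = (\<Sum>j\<in>UNIV. p $ j)"
    by (simp add: sum.distrib flip: sum_distrib_left)
  then show ?thesis
    using assms by (auto simp: unit_simplex_def axis_def)
qed

lemma Pi_alpha_no_two_positive:
  fixes E :: "'n::finite \<Rightarrow> 'n \<Rightarrow> bool"
  assumes "\<And>i. E i i" "\<And>i j. E i j \<longleftrightarrow> E j i" "\<And>i. 0 < \<mu> i"
    and "1 < \<alpha>" "p \<in> Pi_alpha E \<mu> \<alpha>" "i \<noteq> k"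
  shows "p $ i = 0 \<or> p $ k = 0"
proof (rule ccontr)
  assume "\<not> (p $ i = 0 \<or> p $ k = 0)"
  moreover obtain e where simplex: "p \<in> unit_simplex" and "0 < e"
    and local_max: "\<And>y. y \<in> unit_simplex \<Longrightarrow> dist y p < e \<Longrightarrow> Psi E \<mu> \<alpha> y \<le> Psi E \<mu> \<alpha> p"
    using assms(5) unfolding Pi_alpha_def local_max_on_def by blast
  moreover have nonneg: "\<And>j. 0 \<le> p $ j"
    using simplex by (simp add: unit_simplex_def)
  ultimately have "0 < p $ i" "0 < p $ k"
    by (auto simp: order.order_iff_strict)
  define t where "t = min (e / 4) (min (p $ i / 2) (p $ k / 2))"
  define v :: "real ^ 'n" where "v = axis i 1 - axis k 1"
  have t: "0 < t" "t < p $ i" "t < p $ k" "t < e / 2"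
    using \<open>0 < e\<close> \<open>0 < p $ i\<close> \<open>0 < p $ k\<close> by (auto simp: t_def)
  have "norm v \<le> 2"
    using norm_triangle_ineq4[of "axis i (1::real)" "axis k 1"] by (simp add: v_def)
  then have "dist (p + s *\<^sub>R v) p < e" if "\<bar>s\<bar> \<le> t" for s
    using that t mult_mono[of "\<bar>s\<bar>" t "norm v" 2] by (simp add: dist_norm)
  moreover have "p + s *\<^sub>R v \<in> unit_simplex" if "\<bar>s\<bar> \<le> t" for s
    using that t simplex unfolding v_def by (intro unit_simplex_transfer_mem) auto
  ultimately have "Psi E \<mu> \<alpha> (p + s *\<^sub>R v) \<le> Psi E \<mu> \<alpha> p" if "\<bar>s\<bar> \<le> t" for s
    using that by (intro local_max)
  from this[of t] this[of "- t"] show False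
    using Psi_transfer_midpoint_less[of E \<mu> p \<alpha> i k t] assms nonneg t
    by (simp add: v_def)
qed

lemma unit_simplex_single_support_mem_B_star:
  assumes "p \<in> unit_simplex" "\<And>i k. i \<noteq> k \<Longrightarrow> p $ i = 0 \<or> p $ k = 0"
  shows "p \<in> B_star"
proof -
  obtain i where "p $ i \<noteq> 0"
    using assms(1) by (force simp: unit_simplex_def)
  then have zero: "p $ j = 0" if "j \<noteq> i" for j
    using assms(2) that by blast
  then have "(\<Sum>j\<in>UNIV. p $ j) = p $ i"
    by (intro sum.mono_neutral_right[where S="{i}", simplified]) auto
  then have "p = axis i 1"
    using assms(1) zero by (auto simp: unit_simplex_def vec_eq_iff axis_def)
  then show ?thesis
    by (auto simp: B_star_def)
qed

lemma Pi_alpha_subset_B_star: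
  fixes E :: "'n::finite \<Rightarrow> 'n \<Rightarrow> bool"
  assumes "\<And>i. E i i" "\<And>i j. E i j \<longleftrightarrow> E j i" "\<And>i. 0 < \<mu> i" "1 < \<alpha>"
  shows "Pi_alpha E \<mu> \<alpha> \<subseteq> B_star"
proof
  fix p assume "p \<in> Pi_alpha E \<mu> \<alpha>"
  then show "p \<in> B_star"
    using Pi_alpha_no_two_positive[of E \<mu> \<alpha> p] assms
    by (intro unit_simplex_single_support_mem_B_star) (auto simp: Pi_alpha_def local_max_on_def)
qed

theorem lemma4:
  fixes E :: "'n::finite \<Rightarrow> 'n \<Rightarrow> bool"
    and \<mu> :: "'n \<Rightarrow> real"
    and \<alpha> :: "nat \<Rightarrow> real"
    and \<pi> :: "nat \<Rightarrow> real ^ 'n"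
  assumes "CARD('n) > 1"
    and "\<And>i. E i i"
    and "\<And>i j. E i j \<longleftrightarrow> E j i"
    and "irreducible_graph E"
    and "\<And>i. \<mu> i > 0"
    and "\<And>n. \<alpha> n > 0"
    and "incseq \<alpha>"
    and "filterlim \<alpha> at_top sequentially"
    and "\<And>n. \<pi> n \<in> Pi_alpha E \<mu> (\<alpha> n)"
  shows "(\<lambda>n. infdist (\<pi> n) B_star) \<longlonglongrightarrow> 0"
proof (rule tendsto_eventually)
  have "eventually (\<lambda>n. 1 < \<alpha> n) sequentially"
    using assms(8) by (simp add: filterlim_at_top_dense)
  then show "eventually (\<lambda>n. infdist (\<pi> n) B_star = 0) sequentially"
  proof (rule eventually_mono)
    fix n assume "1 < \<alpha> n"
    then have "\<pi> n \<in> B_star"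
      using Pi_alpha_subset_B_star[of E \<mu> "\<alpha> n"] assms(2,3,5,9) by blast
    then show "infdist (\<pi> n) B_star = 0"
      by simp
  qed
qed

end
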